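(* Let $p\in(1,\infty)$ and let $u\in C(Q_1)$ be a viscosity solution of $\mathcal{L}u-u_t=f$ in $U^+:=\{u>0\}$, where $f$ satisfies $0<c_0\le f\le c_1$. Then for every $(z,s)\in\overline{\{u>0\}}$ and $r>0$ with $Q_r(z,s)\subset Q_1$, $$\sup_{(x,t)\in\partial_pQ^-_r(z,s)}u(x,t)\ge\mu_0r^2+u(z,s),\qquad \mu_0=\min\Big(\frac{pc_0}{4(n+p-2)},\frac{c_0}{2}\Big).$$
   Context: $\mathcal{L}v=\frac1p\Delta v+\frac{p-2}{p}\langle D^2v\frac{\nabla v}{|\nabla v|},\frac{\nabla v}{|\nabla v|}\rangle$; viscosity solutions are defined via $C^2$ test functions, using $\mathcal{L}\phi-\phi_t$ when $\nabla\phi\neq0$, and $\Delta\phi+(p-2)\lambda_{\max}(D^2\phi)-\phi_t$ (if $p\ge2$) or $\Delta\phi+(p-2)\lambda_{\min}(D^2\phi)-\phi_t$ (if $1<p<2$) when $\nabla\phi=0$. $Q_r(z,s)=B_r(z)\times(s-r^2,s+r^2)$, $Q_1=Q_1(0,0)$, $Q^-_r(z,s)=B_r(z)\times(s-r^2,s]$, and $\partial_p$ denotes the parabolic boundary (lateral boundary together with the bottom). *)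

theory Defs
  imports "HOL-Analysis.Analysis"
begin

text \<open>Points of space-time are pairs (x,t) with x in R^n (n = CARD('n)) and t real.\<close>

definition cyl :: "real \<Rightarrow> real^'n \<Rightarrow> real \<Rightarrow> ((real^'n) \<times> real) set" where
  "cyl r z s = {(x,t). dist x z < r \<and> s - r^2 < t \<and> t < s + r^2}"

definition Q1 :: "((real^'n) \<times> real) set" where
  "Q1 = cyl 1 0 0"

text \<open>Parabolic boundary of Q^-_r(z,s) = B_r(z) x (s-r^2, s]: lateral part plus bottom.\<close>
definition par_bdry_lower :: "real \<Rightarrow> real^'n \<Rightarrow> real \<Rightarrow> ((real^'n) \<times> real) set" where
  "par_bdry_lower r z s =
     {(x,t). dist x z = r \<and> s - r^2 \<le> t \<and> t \<le> s}
     \<union> {(x,t). dist x z \<le> r \<and> t = s - r^2}"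

definition mtrace :: "real^'n^'n \<Rightarrow> real" where
  "mtrace H = (\<Sum>i\<in>UNIV. H $ i $ i)"

definition eig_max :: "real^'n^'n \<Rightarrow> real" where
  "eig_max H = Max {c. \<exists>v. v \<noteq> 0 \<and> H *v v = c *\<^sub>R v}"

definition eig_min :: "real^'n^'n \<Rightarrow> real" where
  "eig_min H = Min {c. \<exists>v. v \<noteq> 0 \<and> H *v v = c *\<^sub>R v}"

text \<open>The normalized p-Laplacian of a test function with gradient g and Hessian H (g nonzero).\<close>
definition Lop :: "real \<Rightarrow> real^'n \<Rightarrow> real^'n^'n \<Rightarrow> real" where
  "Lop p g H = (1/p) * mtrace H + ((p-2)/p) * ((H *v g) \<bullet> g) / (norm g)^2"

text \<open>Operator used for subsolutions (upper envelope at vanishing gradient).\<close>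
definition F_sub :: "real \<Rightarrow> real^'n \<Rightarrow> real^'n^'n \<Rightarrow> real \<Rightarrow> real" where
  "F_sub p g H ph_t =
     (if g \<noteq> 0 then Lop p g H - ph_t
      else if p \<ge> 2 then (1/p) * (mtrace H + (p-2) * eig_max H) - ph_t
      else (1/p) * (mtrace H + (p-2) * eig_min H) - ph_t)"

text \<open>Operator used for supersolutions (lower envelope at vanishing gradient).\<close>
definition F_super :: "real \<Rightarrow> real^'n \<Rightarrow> real^'n^'n \<Rightarrow> real \<Rightarrow> real" where
  "F_super p g H ph_t =
     (if g \<noteq> 0 then Lop p g H - ph_t
      else if p \<ge> 2 then (1/p) * (mtrace H + (p-2) * eig_min H) - ph_t
      else (1/p) * (mtrace H + (p-2) * eig_max H) - ph_t)"

definition C2_test ::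
  "(real^'n \<Rightarrow> real \<Rightarrow> real) \<Rightarrow> ((real^'n) \<times> real) set \<Rightarrow>
   (real^'n \<Rightarrow> real \<Rightarrow> real^'n) \<Rightarrow> (real^'n \<Rightarrow> real \<Rightarrow> real) \<Rightarrow>
   (real^'n \<Rightarrow> real \<Rightarrow> real^'n^'n) \<Rightarrow> (real^'n \<Rightarrow> real \<Rightarrow> real^'n) \<Rightarrow>
   (real^'n \<Rightarrow> real \<Rightarrow> real) \<Rightarrow> bool" where
  "C2_test phi N Dx Dt H Dxt Dtt \<longleftrightarrow> open N \<and>
     (\<forall>(x,t)\<in>N.
        ((\<lambda>y. phi (fst y) (snd y)) has_derivative
           (\<lambda>h. Dx x t \<bullet> fst h + Dt x t * snd h)) (at (x,t)) \<and>
        ((\<lambda>y. Dx (fst y) (snd y)) has_derivative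
           (\<lambda>h. H x t *v fst h + snd h *\<^sub>R Dxt x t)) (at (x,t)) \<and>
        ((\<lambda>y. Dt (fst y) (snd y)) has_derivative
           (\<lambda>h. Dxt x t \<bullet> fst h + Dtt x t * snd h)) (at (x,t))) \<and>
     continuous_on N (\<lambda>y. H (fst y) (snd y)) \<and>
     continuous_on N (\<lambda>y. Dxt (fst y) (snd y)) \<and>
     continuous_on N (\<lambda>y. Dtt (fst y) (snd y))"

definition visc_sub :: "real \<Rightarrow> (real^'n \<Rightarrow> real \<Rightarrow> real) \<Rightarrow> (real^'n \<Rightarrow> real \<Rightarrow> real) \<Rightarrow>
    ((real^'n) \<times> real) set \<Rightarrow> bool" where
  "visc_sub p f u U \<longleftrightarrow> continuous_on U (\<lambda>y. u (fst y) (snd y)) \<and>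
     (\<forall>x0 t0 N phi Dx Dt H Dxt Dtt.
        (x0,t0) \<in> N \<and> N \<subseteq> U \<and> C2_test phi N Dx Dt H Dxt Dtt \<and>
        (\<forall>(y,\<tau>)\<in>N. u y \<tau> - phi y \<tau> \<le> u x0 t0 - phi x0 t0)
        \<longrightarrow> F_sub p (Dx x0 t0) (H x0 t0) (Dt x0 t0) \<ge> f x0 t0)"

definition visc_super :: "real \<Rightarrow> (real^'n \<Rightarrow> real \<Rightarrow> real) \<Rightarrow> (real^'n \<Rightarrow> real \<Rightarrow> real) \<Rightarrow>
    ((real^'n) \<times> real) set \<Rightarrow> bool" where
  "visc_super p f u U \<longleftrightarrow> continuous_on U (\<lambda>y. u (fst y) (snd y)) \<and>
     (\<forall>x0 t0 N phi Dx Dt H Dxt Dtt.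
        (x0,t0) \<in> N \<and> N \<subseteq> U \<and> C2_test phi N Dx Dt H Dxt Dtt \<and>
        (\<forall>(y,\<tau>)\<in>N. u y \<tau> - phi y \<tau> \<ge> u x0 t0 - phi x0 t0)
        \<longrightarrow> F_super p (Dx x0 t0) (H x0 t0) (Dt x0 t0) \<le> f x0 t0)"

definition visc_sol :: "real \<Rightarrow> (real^'n \<Rightarrow> real \<Rightarrow> real) \<Rightarrow> (real^'n \<Rightarrow> real \<Rightarrow> real) \<Rightarrow>
    ((real^'n) \<times> real) set \<Rightarrow> bool" where
  "visc_sol p f u U \<longleftrightarrow> visc_sub p f u U \<and> visc_super p f u U"

end

(* Comparison with an explicit barrier. Suppose u(z,s) > 0 and u <= M on the parabolic
   boundary of Q^-_r(z,s) with M < mu0 r^2 + u(z,s). The barrier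
     phi(x,t) = a + mu0 (|x - z|^2 + (s - t)) + e / (s - t),
   with a slightly below u(z,s), lies above u on the lateral and bottom boundary of the
   truncated cylinder B_r(z) x [s - r^2, s - tau] (there |x - z|^2 + (s - t) >= r^2) and, for
   tau small, on its top t = s - tau (thanks to e/(s - t)), but below u at (z, s - sigma).
   So u - phi has a positive interior maximum, at which u > 0, and the subsolution property
   gives L phi - phi_t >= f >= c0 there. But D^2 phi = 2 mu0 I, so
   L phi - phi_t = 2 mu0 (n + p - 2)/p + mu0 - e/(s - t)^2 < c0 by the choice of mu0.
   A point of the closure of {u > 0} is handled by translating the cylinder to a nearby
   point where u > 0, using uniform continuity of u near the closed cylinder. *)

theory Submission
  imports Defs
begin

lemma cyl_eq_Times: "cyl r z s = ball z r \<times> {s - r^2<..<s + r^2}"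
  by (auto simp: cyl_def dist_commute)

lemma cyl_translation: "cyl r (z + a) (s + b) = (+) (a, b) ` cyl r z s"
proof -
  have "(x, t) \<in> (+) (a, b) ` cyl r z s" if "(x, t) \<in> cyl r (z + a) (s + b)" for x t
    using that by (intro image_eqI[where x = "(x - a, t - b)"]) (auto simp: cyl_def dist_norm algebra_simps)
  then show ?thesis
    by (auto simp: cyl_def dist_norm algebra_simps)
qed

lemma par_bdry_lower_translation:
  "par_bdry_lower r (z + a) (s + b) = (+) (a, b) ` par_bdry_lower r z s"
proof -
  have "(x, t) \<in> (+) (a, b) ` par_bdry_lower r z s" if "(x, t) \<in> par_bdry_lower r (z + a) (s + b)" for x t
    using that by (intro image_eqI[where x = "(x - a, t - b)"]) (auto simp: par_bdry_lower_def dist_norm algebra_simps)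
  then show ?thesis
    by (auto simp: par_bdry_lower_def dist_norm algebra_simps)
qed

lemma closure_cyl: "0 < r \<Longrightarrow> closure (cyl r z s) = cball z r \<times> {s - r^2..s + r^2}"
  by (simp add: cyl_eq_Times closure_Times)

lemma par_bdry_lower_subset_closure_cyl: "0 < r \<Longrightarrow> par_bdry_lower r z s \<subseteq> closure (cyl r z s)"
  by (auto simp: par_bdry_lower_def closure_cyl dist_commute)

lemma open_Q1: "open Q1"
  by (simp add: Q1_def cyl_eq_Times open_Times)

lemma uniformly_continuous_on_compact_nbhd:
  fixes g :: "'a::{real_normed_vector, heine_borel} \<Rightarrow> 'b::metric_space"
  assumes K: "compact K" and S: "open S" "K \<subseteq> S" and g: "continuous_on S g" and \<gamma>: "0 < \<gamma>"
  obtains d where "0 < d" "\<And>x w. x \<in> K \<Longrightarrow> norm w < d \<Longrightarrow> x + w \<in> S \<and> dist (g (x + w)) (g x) < \<gamma>"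
proof -
  obtain \<epsilon> where \<epsilon>: "0 < \<epsilon>" "(\<Union>x\<in>K. ball x \<epsilon>) \<subseteq> S"
    using compact_subset_open_imp_ball_epsilon_subset[OF K S] by blast
  define K' where "K' = {x + w | x w. x \<in> K \<and> w \<in> cball 0 (\<epsilon> / 2)}"
  have K'_mem: "x + w \<in> K'" if "x \<in> K" "norm w \<le> \<epsilon> / 2" for x w
    using that unfolding K'_def by fastforce
  have "K' \<subseteq> S"
  proof
    fix y assume "y \<in> K'"
    then obtain x w where "y = x + w" "x \<in> K" "norm w \<le> \<epsilon> / 2"
      by (auto simp: K'_def)
    then show "y \<in> S"
      using \<epsilon> by (force simp: dist_norm)
  qed
  moreover have "compact K'"
    unfolding K'_def using K by (intro compact_sums compact_cball)
  ultimately have "uniformly_continuous_on K' g"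
    using continuous_on_subset[OF g] compact_uniformly_continuous by blast
  then obtain d where d: "0 < d" "\<forall>x\<in>K'. \<forall>x'\<in>K'. dist x' x < d \<longrightarrow> dist (g x') (g x) < \<gamma>"
    unfolding uniformly_continuous_on_def using \<gamma> by metis
  show thesis
  proof (rule that[of "min d (\<epsilon> / 2)"])
    show "0 < min d (\<epsilon> / 2)"
      using d \<epsilon> by simp
    fix x w :: 'a assume "x \<in> K" "norm w < min d (\<epsilon> / 2)"
    moreover from this have "x + w \<in> K'" "x \<in> K'"
      using K'_mem[of x w] K'_mem[of x 0] \<epsilon> by auto
    ultimately show "x + w \<in> S \<and> dist (g (x + w)) (g x) < \<gamma>"
      using d(2) \<open>K' \<subseteq> S\<close> by (auto simp: dist_norm)
  qed
qed

lemma continuous_attains_sup_in_interior: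
  fixes w :: "'a::topological_space \<Rightarrow> real"
  assumes "compact K" "continuous_on K w" "q \<in> K" "0 < w q"
    and "\<And>y. y \<in> K - interior K \<Longrightarrow> w y \<le> 0"
  shows "\<exists>P \<in> interior K. \<forall>y \<in> K. w y \<le> w P"
proof -
  obtain P where "P \<in> K" "\<forall>y\<in>K. w y \<le> w P"
    using continuous_attains_sup[OF assms(1) _ assms(2)] assms(3) by blast
  moreover have "P \<notin> K - interior K"
    using assms(3-5) calculation by force
  ultimately show ?thesis
    by blast
qed

definition mu0 :: "real \<Rightarrow> real \<Rightarrow> real \<Rightarrow> real" where
  "mu0 p c0 n = min (p * c0 / (4 * (n + p - 2))) (c0 / 2)"

lemma mu0_pos:
  assumes "1 < p" "0 < c0" "1 \<le> n"
  shows "0 < mu0 p c0 n"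
proof -
  have "0 < n + p - 2"
    using assms by linarith
  then show ?thesis
    using assms by (simp add: mu0_def)
qed

definition barrier :: "real \<Rightarrow> real \<Rightarrow> real \<Rightarrow> real^'n \<Rightarrow> real \<Rightarrow> real^'n \<Rightarrow> real \<Rightarrow> real" where
  "barrier a c e z s x t = a + c * ((x - z) \<bullet> (x - z) + (s - t)) + e / (s - t)"

lemma matrix_vector_mult_mat: "mat k *v x = k *\<^sub>R (x :: real^'n)"
  by (simp add: vec_eq_iff matrix_vector_mult_def mat_def if_distrib if_distribR cong: if_cong)

lemma eigenvalues_mat: "{c. \<exists>v. v \<noteq> 0 \<and> (mat k :: real^'n^'n) *v v = c *\<^sub>R v} = {k}"
proof -
  obtain w :: "real^'n" where "w \<noteq> 0"
    by (metis axis_eq_0_iff zero_neq_one)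
  then show ?thesis
    by (auto simp: matrix_vector_mult_mat scaleR_cancel_right)
qed

lemma F_sub_mat:
  assumes "p \<noteq> 0"
  shows "F_sub p (g :: real^'n) (mat k) d = (real CARD('n) + p - 2) * k / p - d"
proof -
  have "mtrace (mat k :: real^'n^'n) = real CARD('n) * k"
    by (simp add: mtrace_def mat_def)
  moreover have "eig_max (mat k :: real^'n^'n) = k" "eig_min (mat k :: real^'n^'n) = k"
    by (simp_all add: eig_max_def eig_min_def eigenvalues_mat)
  moreover have "Lop p g (mat k) = (real CARD('n) + p - 2) * k / p" if "g \<noteq> 0"
    using that assms \<open>mtrace (mat k) = _\<close>
    by (simp add: Lop_def matrix_vector_mult_mat power2_norm_eq_inner field_simps)
  ultimately show ?thesis
    using assms by (auto simp: F_sub_def field_simps)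
qed

lemma F_sub_barrier_less:
  fixes g :: "real^'n"
  assumes p: "1 < p" and e: "0 < e" and t: "t \<noteq> s"
    and c: "c \<le> mu0 p c0 (real CARD('n))"
  shows "F_sub p g (mat (2 * c)) (- c + e / (s - t)^2) < c0"
proof -
  have "1 \<le> real CARD('n)"
    by simp
  then have n: "0 < real CARD('n) + p - 2"
    using p by linarith
  have "(real CARD('n) + p - 2) * (2 * c) / p \<le> c0 / 2"
    using c n p by (simp add: mu0_def field_simps)
  moreover have "0 < e / (s - t)^2"
    using e t by simp
  ultimately show ?thesis
    using p c by (simp add: F_sub_mat mu0_def)
qed

lemma C2_test_barrier:
  assumes "open N" "\<forall>y\<in>N. snd y < s"
  shows "C2_test (barrier a c e z s) N
     (\<lambda>x t. (2 * c) *\<^sub>R (x - z)) (\<lambda>x t. - c + e / (s - t)^2) (\<lambda>x t. mat (2 * c))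
     (\<lambda>x t. 0) (\<lambda>x t. 2 * e / (s - t)^3)"
  unfolding C2_test_def
proof (intro conjI ballI; clarify?; (intro conjI)?)
  fix x t assume "(x, t) \<in> N"
  then have st: "s - t \<noteq> 0"
    using assms(2) by force
  show "((\<lambda>y. barrier a c e z s (fst y) (snd y)) has_derivative
      (\<lambda>h. (2 * c) *\<^sub>R (x - z) \<bullet> fst h + (- c + e / (s - t)^2) * snd h)) (at (x, t))"
    unfolding barrier_def using st
    by - (rule has_derivative_eq_rhs, (rule derivative_eq_intros refl | simp)+,
          simp add: fun_eq_iff algebra_simps inner_commute power2_eq_square divide_simps)
  show "((\<lambda>y. (2 * c) *\<^sub>R (fst y - z)) has_derivative (\<lambda>h. mat (2 * c) *v fst h + snd h *\<^sub>R 0)) (at (x, t))"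
    by (rule has_derivative_eq_rhs, (rule derivative_eq_intros refl | simp)+)
       (simp add: matrix_vector_mult_mat)
  show "((\<lambda>y. - c + e / (s - snd y)^2) has_derivative
      (\<lambda>h. 0 \<bullet> fst h + 2 * e / (s - t)^3 * snd h)) (at (x, t))"
    using st
    by - (rule has_derivative_eq_rhs, (rule derivative_eq_intros refl | simp)+,
          simp add: fun_eq_iff power2_eq_square power3_eq_cube divide_simps)
next
  show "continuous_on N (\<lambda>y. 2 * e / (s - snd y) ^ 3)"
    using assms(2) by (intro continuous_intros) auto
qed (simp_all add: assms(1))

lemma barrier_ge_paraboloid:
  "t < s \<Longrightarrow> 0 \<le> e \<Longrightarrow> a + c * ((x - z) \<bullet> (x - z) + (s - t)) \<le> barrier a c e z s x t"
  by (simp add: barrier_def)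

lemma barrier_above_on_boundary:
  fixes u :: "real^'n \<Rightarrow> real \<Rightarrow> real"
  assumes c: "0 < c" and e: "0 \<le> e" and \<tau>: "0 < \<tau>"
    and lateral_bottom: "\<forall>(x,t) \<in> par_bdry_lower r z s. u x t < a + c * r^2"
    and top: "\<forall>x \<in> cball z r. u x (s - \<tau>) < a + e / \<tau>"
    and xt: "(x, t) \<in> cball z r \<times> {s - r^2..s - \<tau>} - ball z r \<times> {s - r^2<..<s - \<tau>}"
  shows "u x t < barrier a c e z s x t"
proof -
  have x: "dist x z \<le> r" and t: "s - r^2 \<le> t" "t \<le> s - \<tau>"
    using xt by (auto simp: dist_commute)
  have "dist x z = r \<or> t = s - r^2 \<or> t = s - \<tau>"
    using xt x t by (auto simp: dist_commute)
  then consider "t = s - \<tau>" | "(x, t) \<in> par_bdry_lower r z s" "r^2 \<le> (x - z) \<bullet> (x - z) + (s - t)"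
    using x t \<tau> by (auto simp: par_bdry_lower_def dist_norm power2_norm_eq_inner)
  then show ?thesis
  proof cases
    case 1
    have "u x t < a + e / \<tau>"
      using top x 1 by (simp add: dist_commute)
    also have "\<dots> \<le> barrier a c e z s x t"
      using 1 c \<tau> by (simp add: barrier_def)
    finally show ?thesis .
  next
    case 2
    have "u x t < a + c * r^2"
      using lateral_bottom 2(1) by auto
    also have "\<dots> \<le> a + c * ((x - z) \<bullet> (x - z) + (s - t))"
      using 2(2) c by simp
    also have "\<dots> \<le> barrier a c e z s x t"
      using t \<tau> e by (intro barrier_ge_paraboloid) simp_all
    finally show ?thesis .
  qed
qed

lemma barrier_touches_in_interior:
  fixes u :: "real^'n \<Rightarrow> real \<Rightarrow> real"
  assumes c: "0 < c" and a: "0 \<le> a" and e: "0 \<le> e" and \<tau>: "0 < \<tau>"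
    and u_cont: "continuous_on (cball z r \<times> {s - r^2..s - \<tau>}) (\<lambda>y. u (fst y) (snd y))"
    and lateral_bottom: "\<forall>(x,t) \<in> par_bdry_lower r z s. u x t < a + c * r^2"
    and top: "\<forall>x \<in> cball z r. u x (s - \<tau>) < a + e / \<tau>"
    and touch: "(x1, t1) \<in> cball z r \<times> {s - r^2..s - \<tau>}" "barrier a c e z s x1 t1 < u x1 t1"
  obtains x0 t0 where "(x0, t0) \<in> ball z r \<times> {s - r^2<..<s - \<tau>}" "0 < u x0 t0"
    "\<forall>(x,t) \<in> cball z r \<times> {s - r^2..s - \<tau>}.
       u x t - barrier a c e z s x t \<le> u x0 t0 - barrier a c e z s x0 t0"
proof -
  define D where "D = cball z r \<times> {s - r^2..s - \<tau>}"
  define w where "w = (\<lambda>y. u (fst y) (snd y) - barrier a c e z s (fst y) (snd y))"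
  have interior_D: "interior D = ball z r \<times> {s - r^2<..<s - \<tau>}"
    by (simp add: D_def interior_Times)
  have "compact D"
    by (simp add: D_def compact_Times)
  moreover have "continuous_on D w"
    unfolding w_def barrier_def D_def using u_cont \<tau>
    by (intro continuous_intros) auto
  moreover have "(x1, t1) \<in> D" "0 < w (x1, t1)"
    using touch by (simp_all add: D_def w_def)
  moreover have "w y \<le> 0" if "y \<in> D - interior D" for y
  proof -
    have "u (fst y) (snd y) < barrier a c e z s (fst y) (snd y)"
      using that unfolding interior_D
      by (intro barrier_above_on_boundary[OF c e \<tau> lateral_bottom top]) (simp add: D_def)
    then show ?thesis
      by (simp add: w_def)
  qed
  ultimately obtain P where P: "P \<in> interior D" "\<forall>y \<in> D. w y \<le> w P"
    using continuous_attains_sup_in_interior by blast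
  obtain x0 t0 where P_eq: "P = (x0, t0)" by fastforce
  have P_in: "(x0, t0) \<in> ball z r \<times> {s - r^2<..<s - \<tau>}"
    using P(1) by (simp add: P_eq interior_D)
  then have "0 \<le> a + c * ((x0 - z) \<bullet> (x0 - z) + (s - t0))"
    using a c \<tau> by simp
  also have "\<dots> \<le> barrier a c e z s x0 t0"
    using P_in \<tau> e by (intro barrier_ge_paraboloid) simp_all
  finally have "0 \<le> barrier a c e z s x0 t0" .
  moreover have "0 < w P"
    using P(2) \<open>(x1, t1) \<in> D\<close> \<open>0 < w (x1, t1)\<close> by fastforce
  moreover have "\<forall>(x,t) \<in> D. w (x, t) \<le> w (x0, t0)"
    using P(2) P_eq by blast
  ultimately show thesis
    using that[OF P_in] by (simp add: w_def P_eq D_def)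
qed

lemma small_with_large_quotient:
  fixes e \<sigma> B :: real
  assumes "0 < e" "0 < \<sigma>"
  obtains \<tau> where "0 < \<tau>" "\<tau> < \<sigma>" "B < e / \<tau>"
proof -
  define q where "q = \<bar>B\<bar> + e / \<sigma> + 1"
  have "0 < e / \<sigma>"
    using assms by simp
  then have "e / \<sigma> < q" "B < q" "0 < q"
    unfolding q_def using abs_ge_self[of B] abs_ge_zero[of B] by linarith+
  moreover have "e / (e / q) = q"
    using assms \<open>0 < q\<close> by simp
  moreover have "e / q < \<sigma>"
    using assms \<open>e / \<sigma> < q\<close> \<open>0 < q\<close> by (simp add: divide_less_eq mult.commute)
  ultimately show thesis
    using that[of "e / q"] assms by simp
qed

lemma continuous_on_approach_from_past:
  fixes u :: "real^'n \<Rightarrow> real \<Rightarrow> real"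
  assumes u_cont: "continuous_on (cball z r \<times> {s - r^2..s + r^2}) (\<lambda>y. u (fst y) (snd y))"
    and "0 < r" "0 < \<rho>" "0 < \<eta>"
  obtains \<sigma> where "0 < \<sigma>" "\<sigma> < \<rho>" "\<sigma> < r^2" "u z s - \<eta> < u z (s - \<sigma>)"
proof -
  define K where "K = cball z r \<times> {s - r^2..s + r^2}"
  have "(z, s) \<in> K"
    using \<open>0 < r\<close> by (simp add: K_def)
  then obtain d where d: "0 < d"
    "\<forall>y \<in> K. dist y (z, s) < d \<longrightarrow> dist (u (fst y) (snd y)) (u z s) < \<eta>"
    using u_cont \<open>0 < \<eta>\<close> unfolding continuous_on_iff K_def by fastforce
  define \<sigma> where "\<sigma> = min (d / 2) (min (r^2 / 2) (\<rho> / 2))"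
  have "\<sigma> \<le> d / 2" "\<sigma> \<le> r^2 / 2" "\<sigma> \<le> \<rho> / 2" "0 < \<sigma>"
    using d assms by (simp_all add: \<sigma>_def)
  moreover have "0 < r^2"
    using \<open>0 < r\<close> by simp
  ultimately have \<sigma>: "0 < \<sigma>" "\<sigma> < d" "\<sigma> < \<rho>" "\<sigma> < r^2"
    using d(1) \<open>0 < \<rho>\<close> by linarith+
  then have "(z, s - \<sigma>) \<in> K" "dist (z, s - \<sigma>) (z, s) < d"
    using \<open>0 < r\<close> by (auto simp: K_def dist_Pair_Pair)
  then have "dist (u z (s - \<sigma>)) (u z s) < \<eta>"
    using d(2) by fastforce
  then show thesis
    using that \<sigma> unfolding dist_real_def by (metis abs_diff_less_iff)
qed

lemma exists_separating_barrier:
  fixes u :: "real^'n \<Rightarrow> real \<Rightarrow> real"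
  assumes r: "0 < r" and c: "0 < c"
    and u_cont: "continuous_on (cball z r \<times> {s - r^2..s + r^2}) (\<lambda>y. u (fst y) (snd y))"
    and pos: "0 < u z s"
    and M: "\<forall>(x,t) \<in> par_bdry_lower r z s. u x t \<le> M" and M_less: "M < c * r^2 + u z s"
  obtains a e \<tau> x1 t1 where "0 \<le> a" "0 < e" "0 < \<tau>"
    "\<forall>(x,t) \<in> par_bdry_lower r z s. u x t < a + c * r^2"
    "\<forall>x \<in> cball z r. u x (s - \<tau>) < a + e / \<tau>"
    "(x1, t1) \<in> cball z r \<times> {s - r^2..s - \<tau>}" "barrier a c e z s x1 t1 < u x1 t1"
proof -
  define \<eta> where "\<eta> = min (u z s) (c * r^2 + u z s - M) / 2"
  define a where "a = u z s - \<eta>"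
  have \<eta>: "0 < \<eta>" "0 \<le> a" "M < a + c * r^2"
    using pos M_less by (auto simp: \<eta>_def a_def min_def field_simps)
  obtain \<sigma> where \<sigma>: "0 < \<sigma>" "\<sigma> < \<eta> / (4 * c)" "\<sigma> < r^2"
    and u_near: "u z s - \<eta> / 4 < u z (s - \<sigma>)"
    using continuous_on_approach_from_past[OF u_cont r, of "\<eta> / (4 * c)" "\<eta> / 4"] \<eta> c by auto
  have c\<sigma>: "c * \<sigma> < \<eta> / 4"
    using \<sigma>(2) c by (simp add: field_simps)
  define e where "e = \<sigma> * \<eta> / 4"
  have e: "0 < e"
    using \<sigma> \<eta> by (simp add: e_def)
  obtain B where B: "\<forall>y \<in> cball z r \<times> {s - r^2..s + r^2}. u (fst y) (snd y) \<le> B"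
    using continuous_attains_sup[OF _ _ u_cont] r by (fastforce simp: compact_Times)
  obtain \<tau> where \<tau>: "0 < \<tau>" "\<tau> < \<sigma>" "B - a < e / \<tau>"
    using small_with_large_quotient[OF e \<sigma>(1)] by blast
  show thesis
  proof
    show "0 \<le> a" "0 < e" "0 < \<tau>"
      using \<eta> e \<tau> by simp_all
    show "\<forall>(x,t) \<in> par_bdry_lower r z s. u x t < a + c * r^2"
      using M \<eta>(3) by fastforce
    show "\<forall>x \<in> cball z r. u x (s - \<tau>) < a + e / \<tau>"
    proof
      fix x assume "x \<in> cball z r"
      then have "u x (s - \<tau>) \<le> B"
        using B \<tau> \<sigma> by auto
      then show "u x (s - \<tau>) < a + e / \<tau>"
        using \<tau>(3) by linarith
    qed
    show "(z, s - \<sigma>) \<in> cball z r \<times> {s - r^2..s - \<tau>}"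
      using \<sigma> \<tau> r by simp
    have "barrier a c e z s z (s - \<sigma>) = a + c * \<sigma> + \<eta> / 4"
      using \<sigma> by (simp add: barrier_def e_def)
    then show "barrier a c e z s z (s - \<sigma>) < u z (s - \<sigma>)"
      using c\<sigma> u_near \<eta>(1) unfolding a_def by linarith
  qed
qed

lemma visc_sub_growth_at_positive_point:
  fixes u f :: "real^'n \<Rightarrow> real \<Rightarrow> real"
  assumes p: "1 < p" and c0: "0 < c0"
    and \<Omega>: "open \<Omega>" and u_cont: "continuous_on \<Omega> (\<lambda>y. u (fst y) (snd y))"
    and sub: "visc_sub p f u {(x,t) \<in> \<Omega>. u x t > 0}"
    and f_ge: "\<forall>(x,t) \<in> {(x,t) \<in> \<Omega>. u x t > 0}. c0 \<le> f x t"
    and r: "0 < r" and cyl: "closure (cyl r z s) \<subseteq> \<Omega>"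
    and pos: "0 < u z s"
    and M: "\<forall>(x,t) \<in> par_bdry_lower r z s. u x t \<le> M"
  shows "mu0 p c0 (real CARD('n)) * r^2 + u z s \<le> M"
proof (rule ccontr)
  define \<mu> where "\<mu> = mu0 p c0 (real CARD('n))"
  define U where "U = {(x,t) \<in> \<Omega>. u x t > 0}"
  assume "\<not> ?thesis"
  then have M_less: "M < \<mu> * r^2 + u z s"
    by (simp add: \<mu>_def)
  have \<mu>: "0 < \<mu>"
    using mu0_pos[OF p c0] by (simp add: \<mu>_def)
  have u_cont_cyl: "continuous_on (cball z r \<times> {s - r^2..s + r^2}) (\<lambda>y. u (fst y) (snd y))"
    using continuous_on_subset[OF u_cont cyl] by (simp add: closure_cyl r)
  obtain a e \<tau> x1 t1 where a: "0 \<le> a" and e: "0 < e" and \<tau>: "0 < \<tau>"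
    and lateral_bottom: "\<forall>(x,t) \<in> par_bdry_lower r z s. u x t < a + \<mu> * r^2"
    and top: "\<forall>x \<in> cball z r. u x (s - \<tau>) < a + e / \<tau>"
    and touch: "(x1, t1) \<in> cball z r \<times> {s - r^2..s - \<tau>}" "barrier a \<mu> e z s x1 t1 < u x1 t1"
    by (rule exists_separating_barrier[OF r \<mu> u_cont_cyl pos M M_less])
  have "continuous_on (cball z r \<times> {s - r^2..s - \<tau>}) (\<lambda>y. u (fst y) (snd y))"
    by (rule continuous_on_subset[OF u_cont_cyl]) (use \<tau> in auto)
  then obtain x0 t0 where x0t0: "(x0, t0) \<in> ball z r \<times> {s - r^2<..<s - \<tau>}" "0 < u x0 t0"
    and max: "\<forall>(x,t) \<in> cball z r \<times> {s - r^2..s - \<tau>}.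
       u x t - barrier a \<mu> e z s x t \<le> u x0 t0 - barrier a \<mu> e z s x0 t0"
    using barrier_touches_in_interior[OF \<mu> a less_imp_le[OF e] \<tau> _ lateral_bottom top touch]
    by blast
  define N where "N = ball z r \<times> {s - r^2<..<s - \<tau>} \<inter> U"
  have "U = \<Omega> \<inter> (\<lambda>y. u (fst y) (snd y)) -` {0<..}"
    by (auto simp: U_def)
  then have "open N"
    unfolding N_def using continuous_open_preimage[OF u_cont \<Omega>]
    by (simp add: open_Int open_Times)
  moreover have "\<forall>y \<in> N. snd y < s"
    using \<tau> by (auto simp: N_def)
  ultimately have "C2_test (barrier a \<mu> e z s) N
     (\<lambda>x t. (2 * \<mu>) *\<^sub>R (x - z)) (\<lambda>x t. - \<mu> + e / (s - t)^2) (\<lambda>x t. mat (2 * \<mu>))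
     (\<lambda>x t. 0) (\<lambda>x t. 2 * e / (s - t)^3)"
    by (rule C2_test_barrier)
  moreover have "(x0, t0) \<in> N"
    using x0t0 cyl \<tau> r by (auto simp: N_def U_def closure_cyl)
  moreover have "N \<subseteq> U"
    by (simp add: N_def)
  moreover have "\<forall>(x,t) \<in> N. u x t - barrier a \<mu> e z s x t \<le> u x0 t0 - barrier a \<mu> e z s x0 t0"
    using max by (fastforce simp: N_def)
  ultimately have "f x0 t0 \<le> F_sub p ((2 * \<mu>) *\<^sub>R (x0 - z)) (mat (2 * \<mu>)) (- \<mu> + e / (s - t0)^2)"
    using sub unfolding visc_sub_def U_def by blast
  moreover have "c0 \<le> f x0 t0"
    using f_ge \<open>(x0, t0) \<in> N\<close> \<open>N \<subseteq> U\<close> by (auto simp: U_def)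
  moreover have "F_sub p ((2 * \<mu>) *\<^sub>R (x0 - z)) (mat (2 * \<mu>)) (- \<mu> + e / (s - t0)^2) < c0"
    using x0t0 \<tau> by (intro F_sub_barrier_less[OF p e]) (auto simp: \<mu>_def)
  ultimately show False
    by linarith
qed

lemma visc_sub_growth_at_closure_point:
  fixes u f :: "real^'n \<Rightarrow> real \<Rightarrow> real"
  assumes p: "1 < p" and c0: "0 < c0"
    and \<Omega>: "open \<Omega>" and u_cont: "continuous_on \<Omega> (\<lambda>y. u (fst y) (snd y))"
    and sub: "visc_sub p f u {(x,t) \<in> \<Omega>. u x t > 0}"
    and f_ge: "\<forall>(x,t) \<in> {(x,t) \<in> \<Omega>. u x t > 0}. c0 \<le> f x t"
    and r: "0 < r" and cyl: "closure (cyl r z s) \<subseteq> \<Omega>"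
    and zs: "(z, s) \<in> closure {(x,t) \<in> \<Omega>. u x t > 0}"
    and M: "\<forall>(x,t) \<in> par_bdry_lower r z s. u x t \<le> M"
  shows "mu0 p c0 (real CARD('n)) * r^2 + u z s \<le> M"
proof (rule field_le_epsilon)
  fix \<epsilon> :: real assume "0 < \<epsilon>"
  define g where "g = (\<lambda>y. u (fst y) (snd y))"
  have "compact (closure (cyl r z s))"
    by (simp add: closure_cyl r compact_Times)
  then obtain d where d: "0 < d"
    and near: "\<And>y w. y \<in> closure (cyl r z s) \<Longrightarrow> norm w < d \<Longrightarrow> y + w \<in> \<Omega> \<and> dist (g (y + w)) (g y) < \<epsilon> / 2"
    using uniformly_continuous_on_compact_nbhd[OF _ \<Omega> cyl u_cont[folded g_def]] \<open>0 < \<epsilon>\<close>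
    by (metis half_gt_zero)
  obtain z' s' where zs': "0 < u z' s'" "dist (z', s') (z, s) < d"
    using zs d unfolding closure_approachable by auto
  define w where "w = (z' - z, s' - s)"
  have w: "norm w < d"
    using zs' by (simp add: w_def dist_norm)
  have shift_cyl: "closure (cyl r z' s') = (+) w ` closure (cyl r z s)"
    and shift_bdry: "par_bdry_lower r z' s' = (+) w ` par_bdry_lower r z s"
    using cyl_translation[of r z "z' - z" s "s' - s"] par_bdry_lower_translation[of r z "z' - z" s "s' - s"]
    by (simp_all add: w_def closure_translation)
  have "(z, s) \<in> closure (cyl r z s)"
    using r by (simp add: closure_cyl)
  then have "dist (u z' s') (u z s) < \<epsilon> / 2"
    using near[of "(z, s)" w] w by (simp add: g_def w_def)
  then have "u z s - \<epsilon> / 2 < u z' s'"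
    unfolding dist_real_def by arith
  moreover have "closure (cyl r z' s') \<subseteq> \<Omega>"
    unfolding shift_cyl image_subset_iff using near w by (metis add.commute)
  moreover have "\<forall>(x,t) \<in> par_bdry_lower r z' s'. u x t \<le> M + \<epsilon> / 2"
  proof (intro ballI, clarify)
    fix x t assume "(x, t) \<in> par_bdry_lower r z' s'"
    then obtain q where q: "q \<in> par_bdry_lower r z s" "(x, t) = q + w"
      by (auto simp: shift_bdry add.commute)
    then have "dist (g (q + w)) (g q) < \<epsilon> / 2"
      using near[of q w] w par_bdry_lower_subset_closure_cyl[OF r] by blast
    then have "g (q + w) < g q + \<epsilon> / 2"
      unfolding dist_real_def by arith
    moreover have "g q \<le> M"
      using M q(1) by (auto simp: g_def)
    moreover have "g (q + w) = u x t"
      by (simp add: g_def q(2)[symmetric])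
    ultimately show "u x t \<le> M + \<epsilon> / 2"
      by linarith
  qed
  ultimately have "mu0 p c0 (real CARD('n)) * r^2 + u z' s' \<le> M + \<epsilon> / 2"
    using visc_sub_growth_at_positive_point[OF p c0 \<Omega> u_cont sub f_ge r _ zs'(1)] by blast
  then show "mu0 p c0 (real CARD('n)) * r^2 + u z s \<le> M + \<epsilon>"
    using \<open>u z s - \<epsilon> / 2 < u z' s'\<close> by linarith
qed

theorem lemma4p1:
  fixes p c0 c1 :: real
    and u f :: "real^'n \<Rightarrow> real \<Rightarrow> real"
  assumes p: "1 < p"
    and u_cont: "continuous_on Q1 (\<lambda>y. u (fst y) (snd y))"
    and sol: "visc_sol p f u {(x,t) \<in> Q1. u x t > 0}"
    and c0: "0 < c0"
    and f_bounds: "\<forall>(x,t) \<in> {(x,t) \<in> Q1. u x t > 0}. c0 \<le> f x t \<and> f x t \<le> c1"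
  shows "\<forall>z s r. (z,s) \<in> closure {(x,t) \<in> Q1. u x t > 0} \<and> r > 0 \<and>
            closure (cyl r z s) \<subseteq> Q1 \<longrightarrow>
            (SUP y\<in>par_bdry_lower r z s. u (fst y) (snd y))
              \<ge> min (p * c0 / (4 * (real CARD('n) + p - 2))) (c0 / 2) * r^2 + u z s"
proof (intro allI impI, elim conjE)
  fix z s r
  assume zs: "(z, s) \<in> closure {(x,t) \<in> Q1. u x t > 0}" and r: "0 < r"
    and cyl: "closure (cyl r z s) \<subseteq> Q1"
  have "compact (closure (cyl r z s))"
    by (simp add: closure_cyl r compact_Times)
  moreover have "continuous_on (closure (cyl r z s)) (\<lambda>y. u (fst y) (snd y))"
    using continuous_on_subset[OF u_cont cyl] .
  ultimately have "bdd_above ((\<lambda>y. u (fst y) (snd y)) ` closure (cyl r z s))"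
    by (intro bounded_imp_bdd_above compact_imp_bounded compact_continuous_image)
  then have "bdd_above ((\<lambda>y. u (fst y) (snd y)) ` par_bdry_lower r z s)"
    by (rule bdd_above_mono) (use par_bdry_lower_subset_closure_cyl[OF r] in blast)
  then have "\<forall>(x,t) \<in> par_bdry_lower r z s. u x t \<le> (SUP y\<in>par_bdry_lower r z s. u (fst y) (snd y))"
    by (auto intro: cSUP_upper2)
  moreover have "visc_sub p f u {(x,t) \<in> Q1. u x t > 0}"
    using sol by (simp add: visc_sol_def)
  moreover have "\<forall>(x,t) \<in> {(x,t) \<in> Q1. u x t > 0}. c0 \<le> f x t"
    using f_bounds by blast
  ultimately show "(SUP y\<in>par_bdry_lower r z s. u (fst y) (snd y))
      \<ge> min (p * c0 / (4 * (real CARD('n) + p - 2))) (c0 / 2) * r^2 + u z s"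
    using visc_sub_growth_at_closure_point[OF p c0 open_Q1 u_cont _ _ r cyl zs]
    by (simp add: mu0_def)
qed

end
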